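(* Let $X=\mathbb{CP}^2\#n\overline{\mathbb{CP}}^2$ with $K_0=-3H+E_1+\cdots+E_n$, let $k$ be a positive integer and $U_5=\{A\in H_2(X;\mathbb{Z}):\mathrm{ind}(A)\ge 2k,\ A\cdot H>0\}$. (1) Every $\phi\in D_{K_0}$ satisfies $\phi(U_5)=U_5$. (2) If $n\le 8$, then for every $A\in U_5$ the orbit $\{\phi(A):\phi\in D_{K_0}\}$ is a finite subset of $U_5$.
   Context: $\{H,E_1,\dots,E_n\}$ is the standard basis of $H_2(X;\mathbb{Z})$, $\mathrm{ind}(A):=A^2-K_0\cdot A$. $D_{K_0}$ is the group of automorphisms of $H_2(X)$ induced by diffeomorphisms of $X$ preserving the canonical class $K_0$; it is generated by the reflections along the classes $E_i-E_j$ and $H-E_1-E_2-E_3$ (reflection along $v$ with $v^2=-2$ being $x\mapsto x+(x\cdot v)v$). *)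

theory Defs
  imports Main
begin

text \<open>Classes in H_2(X;Z) for X = CP^2 # n (-CP^2) are encoded as integer
  coefficient functions c :: nat \<Rightarrow> int with respect to the basis
  H (index 0), E_1, ..., E_n (indices 1..n); coefficients beyond n are zero.\<close>

type_synonym hclass = "nat \<Rightarrow> int"

definition classes :: "nat \<Rightarrow> hclass set" where
  "classes n = {a. \<forall>i>n. a i = 0}"

definition iform :: "nat \<Rightarrow> hclass \<Rightarrow> hclass \<Rightarrow> int" where
  "iform n a b = a 0 * b 0 - (\<Sum>i\<in>{1..n}. a i * b i)"

definition clH :: hclass where
  "clH = (\<lambda>i. if i = 0 then 1 else 0)"

definition clE :: "nat \<Rightarrow> hclass" where
  "clE j = (\<lambda>i. if i = j then 1 else 0)"

definition K0 :: "nat \<Rightarrow> hclass" where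
  "K0 n = (\<lambda>i. if i = 0 then -3 else if i \<le> n then 1 else 0)"

definition ind :: "nat \<Rightarrow> hclass \<Rightarrow> int" where
  "ind n A = iform n A A - iform n (K0 n) A"

definition refl :: "nat \<Rightarrow> hclass \<Rightarrow> hclass \<Rightarrow> hclass" where
  "refl n v = (\<lambda>x. (\<lambda>i. x i + iform n x v * v i))"

definition gens :: "nat \<Rightarrow> hclass set" where
  "gens n = {(\<lambda>l. clE i l - clE j l) | i j. 1 \<le> i \<and> i \<le> n \<and> 1 \<le> j \<and> j \<le> n \<and> i \<noteq> j}
          \<union> {v. n \<ge> 3 \<and> v = (\<lambda>l. clH l - clE 1 l - clE 2 l - clE 3 l)}"

inductive_set DK0 :: "nat \<Rightarrow> (hclass \<Rightarrow> hclass) set" for n where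
  id_in: "id \<in> DK0 n"
| gen_in: "v \<in> gens n \<Longrightarrow> refl n v \<in> DK0 n"
| comp_in: "f \<in> DK0 n \<Longrightarrow> g \<in> DK0 n \<Longrightarrow> f \<circ> g \<in> DK0 n"
| inv_in: "f \<in> DK0 n \<Longrightarrow> inv f \<in> DK0 n"

definition U5 :: "nat \<Rightarrow> nat \<Rightarrow> hclass set" where
  "U5 n k = {A \<in> classes n. ind n A \<ge> 2 * int k \<and> iform n A clH > 0}"

end

theory Submission
  imports Defs "HOL-Analysis.Convex"
begin

text \<open>Each generating reflection is an involutive isometry of the intersection form that is
  orthogonal to \<open>K\<^sub>0\<close>, so it preserves \<open>ind\<close> and every level set of the pairings
  \<open>A\<cdot>A\<close>, \<open>K\<^sub>0\<cdot>A\<close>. Write \<open>a\<close> for the coefficient of \<open>H\<close> and \<open>c\<^sub>i\<close> for that of \<open>E\<^sub>i\<close>.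
  The reflections along \<open>E\<^sub>i - E\<^sub>j\<close> fix \<open>a\<close>; the one along \<open>H - E\<^sub>1 - E\<^sub>2 - E\<^sub>3\<close>
  replaces it by \<open>2a + c\<^sub>1 + c\<^sub>2 + c\<^sub>3\<close>, which stays positive when \<open>ind \<ge> 2\<close> by
  Cauchy-Schwarz on \<open>c\<^sub>1, c\<^sub>2, c\<^sub>3\<close>. As bijections preserving a set form a group,
  \<open>D\<^sub>K\<^sub>0\<close> preserves \<open>U\<^sub>5\<close>. For \<open>n \<le> 8\<close> an orbit lies in a level set, which is finite:
  Cauchy-Schwarz gives \<open>(K\<^sub>0\<cdot>B + 3a)\<^sup>2 = (\<Sum>c\<^sub>i)\<^sup>2 \<le> 8 \<Sum>c\<^sub>i\<^sup>2 = 8 (a\<^sup>2 - B\<cdot>B)\<close>,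
  a bound on \<open>a\<close> and then on every \<open>c\<^sub>i\<close>.\<close>

lemma abs_le_square_int: "\<bar>t::int\<bar> \<le> t\<^sup>2"
proof (cases "t = 0")
  case False
  then have "\<bar>t\<bar> * 1 \<le> \<bar>t\<bar> * \<bar>t\<bar>" by (intro mult_left_mono) auto
  then show ?thesis by (simp add: power2_eq_square abs_mult[symmetric])
qed simp

lemma sum_squared_le_sum_of_squares_int:
  fixes c :: "'a \<Rightarrow> int"
  shows "(\<Sum>i\<in>I. c i)\<^sup>2 \<le> int (card I) * (\<Sum>i\<in>I. (c i)\<^sup>2)"
proof -
  have "(\<Sum>i\<in>I. real_of_int (c i))\<^sup>2 \<le> (\<Sum>i\<in>I. (real_of_int (c i))\<^sup>2) * card I"
    by (rule sum_squared_le_sum_of_squares)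
  then have "real_of_int ((\<Sum>i\<in>I. c i)\<^sup>2) \<le> real_of_int (int (card I) * (\<Sum>i\<in>I. (c i)\<^sup>2))"
    by (simp add: mult.commute)
  then show ?thesis by linarith
qed

lemma iform_commute: "iform n x y = iform n y x"
  unfolding iform_def by (simp add: mult.commute)

lemma iform_add_scaled_left: "iform n (\<lambda>i. x i + c * v i) y = iform n x y + c * iform n v y"
  unfolding iform_def by (simp add: algebra_simps sum.distrib sum_distrib_left)

lemma iform_diff_right: "iform n x (\<lambda>i. a i - b i) = iform n x a - iform n x b"
  unfolding iform_def by (simp add: algebra_simps sum_subtractf)

lemma iform_clH: "iform n x clH = x 0"
  unfolding iform_def clH_def by simp

lemma iform_clE: "1 \<le> j \<Longrightarrow> j \<le> n \<Longrightarrow> iform n x (clE j) = - x j"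
  unfolding iform_def clE_def by (simp add: if_distrib cong: if_cong)

lemma iform_K0_left: "iform n (K0 n) x = -3 * x 0 - (\<Sum>i\<in>{1..n}. x i)"
  unfolding iform_def K0_def by simp

lemma ind_eq: "ind n x = (x 0)\<^sup>2 + 3 * x 0 - (\<Sum>i\<in>{1..n}. (x i)\<^sup>2 - x i)"
  unfolding ind_def iform_K0_left by (simp add: iform_def sum_subtractf power2_eq_square)

lemma iform_refl_left: "iform n (refl n v x) y = iform n x y + iform n x v * iform n v y"
  unfolding refl_def by (rule iform_add_scaled_left)

lemma iform_refl_right: "iform n y (refl n v x) = iform n y x + iform n x v * iform n y v"
  using iform_refl_left[of n v x y] by (simp add: iform_commute)

lemma refl_refl:
  assumes "iform n v v = -2"
  shows "refl n v (refl n v x) = x"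
proof -
  have "iform n (refl n v x) v = - iform n x v"
    using assms by (simp add: iform_refl_left)
  then show ?thesis by (simp add: refl_def)
qed

lemma iform_refl_refl:
  assumes "iform n v v = -2"
  shows "iform n (refl n v x) (refl n v y) = iform n x y"
  using assms by (simp add: iform_refl_left iform_refl_right iform_commute algebra_simps)

lemma iform_K0_refl: "iform n (K0 n) v = 0 \<Longrightarrow> iform n (K0 n) (refl n v x) = iform n (K0 n) x"
  by (simp add: iform_refl_right)

lemma ind_refl:
  assumes "iform n v v = -2" "iform n (K0 n) v = 0"
  shows "ind n (refl n v x) = ind n x"
  unfolding ind_def iform_refl_refl[OF assms(1)] iform_K0_refl[OF assms(2)] ..

lemma refl_in_classes: "v \<in> classes n \<Longrightarrow> x \<in> classes n \<Longrightarrow> refl n v x \<in> classes n"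
  by (simp add: classes_def refl_def)

lemma gens_cases:
  assumes "v \<in> gens n"
  obtains i j where "1 \<le> i" "i \<le> n" "1 \<le> j" "j \<le> n" "i \<noteq> j" "v = (\<lambda>l. clE i l - clE j l)"
  | "n \<ge> 3" "v = (\<lambda>l. clH l - clE 1 l - clE 2 l - clE 3 l)"
  using assms unfolding gens_def by blast

lemma gens_iform_self: "v \<in> gens n \<Longrightarrow> iform n v v = -2"
  by (erule gens_cases) (simp_all only: iform_diff_right iform_clH iform_clE, auto simp: clE_def clH_def)

lemma gens_iform_K0: "v \<in> gens n \<Longrightarrow> iform n (K0 n) v = 0"
  by (erule gens_cases) (simp_all only: iform_diff_right iform_clH iform_clE, auto simp: K0_def)

lemma gens_in_classes: "v \<in> gens n \<Longrightarrow> v \<in> classes n"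
  by (erule gens_cases) (auto simp: classes_def clE_def clH_def)

lemma ind_ge_2_imp_cremona_H_coeff_pos:
  assumes "n \<ge> 3" "ind n x \<ge> 2" "x 0 > 0"
  shows "2 * x 0 + x 1 + x 2 + x 3 > 0"
proof (rule ccontr)
  let ?I = "{1, 2, 3 :: nat}"
  let ?T = "\<Sum>i\<in>?I. x i" and ?Q = "\<Sum>i\<in>?I. (x i)\<^sup>2"
  assume "\<not> ?thesis"
  then have T: "2 * x 0 \<le> - ?T" by simp
  have "(\<Sum>i\<in>?I. (x i)\<^sup>2 - x i) \<le> (\<Sum>i\<in>{1..n}. (x i)\<^sup>2 - x i)"
    using assms(1) abs_le_square_int by (intro sum_mono2) (auto simp: abs_le_iff)
  then have "?Q - ?T \<le> (x 0)\<^sup>2 + 3 * x 0 - 2"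
    using assms(2) by (simp add: ind_eq sum_subtractf)
  moreover have "?T\<^sup>2 \<le> 3 * ?Q"
    using sum_squared_le_sum_of_squares_int[of x ?I] by simp
  moreover have "(2 * x 0)\<^sup>2 \<le> (- ?T)\<^sup>2"
    using T assms(3) by (intro power_mono) auto
  moreover have "0 \<le> 4 * (x 0)\<^sup>2 - 12 * x 0 + 9"
    using zero_le_power2[of "2 * x 0 - 3"] by (simp add: power2_eq_square algebra_simps)
  ultimately show False
    using T by (simp add: power2_eq_square algebra_simps)
qed

lemma refl_gens_H_coeff_pos:
  assumes "v \<in> gens n" "ind n x \<ge> 2" "x 0 > 0"
  shows "refl n v x 0 > 0"
  using assms(1)
proof (cases rule: gens_cases)
  case (1 i j)
  then show ?thesis using assms(3) by (simp add: refl_def clE_def)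
next
  case 2
  then have "refl n v x 0 = 2 * x 0 + x 1 + x 2 + x 3"
    by (simp add: refl_def iform_diff_right iform_clH iform_clE) (simp add: clE_def clH_def)
  then show ?thesis using ind_ge_2_imp_cremona_H_coeff_pos[OF 2(1) assms(2,3)] by simp
qed

lemma refl_gens_in_U5:
  assumes "v \<in> gens n" "k > 0" "x \<in> U5 n k"
  shows "refl n v x \<in> U5 n k"
  using assms refl_gens_H_coeff_pos[OF assms(1), of x]
  by (auto simp: U5_def iform_clH ind_refl gens_iform_self gens_iform_K0
      refl_in_classes gens_in_classes)

definition pairing_level :: "nat \<Rightarrow> int \<Rightarrow> int \<Rightarrow> hclass set" where
  "pairing_level n q m = {B \<in> classes n. iform n B B = q \<and> iform n (K0 n) B = m}"

lemma refl_gens_in_pairing_level: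
  assumes "v \<in> gens n" "B \<in> pairing_level n q m"
  shows "refl n v B \<in> pairing_level n q m"
  using assms
  by (auto simp: pairing_level_def iform_refl_refl[OF gens_iform_self[OF assms(1)]]
      iform_K0_refl gens_iform_K0 refl_in_classes gens_in_classes)

lemma DK0_image_eq:
  assumes "\<And>v x. v \<in> gens n \<Longrightarrow> x \<in> S \<Longrightarrow> refl n v x \<in> S" "f \<in> DK0 n"
  shows "f ` S = S"
proof -
  \<comment> \<open>Bijectivity is carried along: \<open>inv f\<close> is only meaningful for bijective \<open>f\<close>.\<close>
  have "bij f \<and> f ` S = S"
    using assms(2)
  proof induction
    case id_in
    show ?case by (simp add: bij_id[unfolded id_def])
  next
    case (gen_in v)
    have invol: "\<And>x. refl n v (refl n v x) = x"
      using gen_in gens_iform_self refl_refl by blast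
    have "refl n v ` S = S"
      using assms(1)[OF gen_in] invol by (metis image_eqI subsetI subset_antisym image_subset_iff)
    then show ?case using invol involuntory_imp_bij by blast
  next
    case (comp_in f g)
    then show ?case by (metis bij_comp image_comp)
  next
    case (inv_in f)
    then show ?case by (metis bij_imp_bij_inv bij_is_inj image_inv_f_f)
  qed
  then show ?thesis ..
qed

lemma pairing_level_H_coeff_bound:
  assumes "n \<le> 8" "B \<in> pairing_level n q m"
  shows "(B 0 + 3 * m)\<^sup>2 \<le> 8 * m\<^sup>2 - 8 * q"
proof -
  let ?T = "\<Sum>i\<in>{1..n}. B i" and ?Q = "\<Sum>i\<in>{1..n}. (B i)\<^sup>2"
  have q: "q = (B 0)\<^sup>2 - ?Q"
    using assms(2) by (auto simp: pairing_level_def iform_def power2_eq_square)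
  have m: "m = -3 * B 0 - ?T"
    using assms(2) by (auto simp: pairing_level_def iform_K0_left)
  have "?T\<^sup>2 \<le> int n * ?Q"
    using sum_squared_le_sum_of_squares_int[of B "{1..n}"] by simp
  also have "\<dots> \<le> 8 * ?Q"
    using assms(1) by (intro mult_right_mono) (auto intro: sum_nonneg)
  finally show ?thesis
    unfolding q m by (simp add: power2_eq_square algebra_simps)
qed

lemma finite_pairing_level:
  assumes "n \<le> 8"
  shows "finite (pairing_level n q m)"
proof -
  define R where "R = 8 * m\<^sup>2 - 8 * q + 3 * \<bar>m\<bar>"
  define M where "M = R\<^sup>2 + \<bar>q\<bar>"
  have "pairing_level n q m \<subseteq>
      {f. \<forall>i. (i \<in> {..n} \<longrightarrow> f i \<in> {-M..M}) \<and> (i \<notin> {..n} \<longrightarrow> f i = 0)}"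
  proof (intro subsetI CollectI allI)
    fix B i assume B: "B \<in> pairing_level n q m"
    have "\<bar>B 0 + 3 * m\<bar> \<le> 8 * m\<^sup>2 - 8 * q"
      using abs_le_square_int[of "B 0 + 3 * m"] pairing_level_H_coeff_bound[OF assms B] by linarith
    then have a: "\<bar>B 0\<bar> \<le> R" unfolding R_def by linarith
    then have a2: "(B 0)\<^sup>2 \<le> R\<^sup>2"
      using power_mono[OF a abs_ge_zero, of 2] by simp
    have "\<bar>B i\<bar> \<le> M" if "i \<in> {1..n}"
    proof -
      have "(B i)\<^sup>2 \<le> (\<Sum>j\<in>{1..n}. (B j)\<^sup>2)"
        using that by (intro member_le_sum) auto
      also have "\<dots> = (B 0)\<^sup>2 - q"
        using B by (simp add: pairing_level_def iform_def power2_eq_square)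
      finally show ?thesis using abs_le_square_int[of "B i"] a2 unfolding M_def by linarith
    qed
    moreover have "\<bar>B 0\<bar> \<le> M"
      using a abs_le_square_int[of R] unfolding M_def by linarith
    moreover have "B i = 0" if "i > n"
      using B that by (simp add: pairing_level_def classes_def)
    ultimately show "(i \<in> {..n} \<longrightarrow> B i \<in> {-M..M}) \<and> (i \<notin> {..n} \<longrightarrow> B i = 0)"
      by (cases "i = 0") (auto simp: abs_le_iff)
  qed
  then show ?thesis
    by (rule finite_subset) (intro finite_set_of_finite_funs finite_atMost finite_atLeastAtMost_int)
qed

theorem lemma4p2:
  fixes n k :: nat
  assumes "k > 0"
  shows "(\<forall>\<phi>\<in>DK0 n. \<phi> ` U5 n k = U5 n k)
       \<and> (n \<le> 8 \<longrightarrow> (\<forall>A\<in>U5 n k. finite {\<phi> A | \<phi>. \<phi> \<in> DK0 n}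
                                     \<and> {\<phi> A | \<phi>. \<phi> \<in> DK0 n} \<subseteq> U5 n k))"
proof -
  have U5: "\<phi> ` U5 n k = U5 n k" if "\<phi> \<in> DK0 n" for \<phi>
    using DK0_image_eq[OF refl_gens_in_U5[OF _ assms] that] .
  have finite_orbit: "finite {\<phi> A | \<phi>. \<phi> \<in> DK0 n}" if "n \<le> 8" "A \<in> U5 n k" for A
  proof -
    let ?L = "pairing_level n (iform n A A) (iform n (K0 n) A)"
    have "A \<in> ?L" using that(2) by (simp add: pairing_level_def U5_def)
    then have "{\<phi> A | \<phi>. \<phi> \<in> DK0 n} \<subseteq> ?L"
      using DK0_image_eq[OF refl_gens_in_pairing_level] by blast
    then show ?thesis using finite_pairing_level[OF that(1)] finite_subset by blast
  qed
  show ?thesis using U5 finite_orbit by blast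
qed

end
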